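(* Let $\mathcal Y\subset\mathbb R^d$ be finite with no element a strict convex combination of others, $Y$ the matrix with columns $y\in\mathcal Y$, $\mathcal C=\operatorname{conv}(\mathcal Y)$, and $V$ the direction of $\operatorname{aff}(\mathcal Y)$. Let $\Omega_\Delta$ be a proper l.s.c. convex function on $\mathbb R^{\mathcal Y}$ with domain $\Delta^{\mathcal Y}$ whose restriction to the affine hull $H_\Delta$ of $\Delta^{\mathcal Y}$ is Legendre-type (w.r.t. the metric of $H_\Delta$). Define $\Omega_{\mathcal C}(\mu):=\min\{\Omega_\Delta(q):q\in\Delta^{\mathcal Y},\ Yq=\mu\}$ for $\mu\in\mathcal C$ (and $+\infty$ otherwise). For $\theta\in\mathbb R^d$ and $q\in\Delta^{\mathcal Y}$ put $s_\theta=Y^\top\theta$, $\mu_q=Yq$. Then: (1) $\langle s_\theta|q\rangle=\langle\theta|\mu_q\rangle$. (2) $\Omega_{\mathcal C}^*(\theta)=\Omega_\Delta^*(Y^\top\theta)$; hence $\operatorname{dom}(\Omega^*_{\mathcal C})=\mathbb R^d$, $\Omega^*_{\mathcal C}$ is differentiable on $\mathbb R^d$ and affine on $V^\perp$. (3) $\Omega_\Delta(q)\ge\Omega_{\mathcal C}(\mu_q)$ and $\mathcal L_{\Omega_\Delta}(s_\theta;q)\ge\mathcal L_{\Omega_{\mathcal C}}(\theta;\mu_q)$, both with equality if and only if $q$ minimizes $\Omega_\Delta$ over $\{q'\in\Delta^{\mathcal Y}:Yq'=\mu_q\}$. (4) $\inf_{\theta'}\mathcal L_{\Omega_\Delta}(s_{\theta'};q)\ge\inf_{\theta'}\mathcal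 L_{\Omega_{\mathcal C}}(\theta';\mu_q)$, with equality if and only if $q$ minimizes $\Omega_\Delta$ over $\{q'\in\Delta^{\mathcal Y}:Yq'=\mu_q\}$. (5) $\nabla_\theta\mathcal L_{\Omega_\Delta}(s_\theta;q)=\nabla_\theta\mathcal L_{\Omega_{\mathcal C}}(\theta;\mu_q)=Y(\nabla\Omega_\Delta^*(s_\theta)-q)=\nabla\Omega^*_{\mathcal C}(\theta)-\mu_q$.
   Context: $\Delta^{\mathcal Y}$ is the probability simplex in $\mathbb R^{\mathcal Y}$. Legendre-type: strictly convex on the interior of its domain and essentially smooth (nonempty interior, differentiable there, gradient norm blowing up at the boundary of the domain). ${}^*$ denotes Fenchel conjugation and for a convex $\Omega$, $\mathcal L_\Omega(\theta;\mu)=\Omega(\mu)+\Omega^*(\theta)-\langle\theta|\mu\rangle$ is its Fenchel–Young loss. *)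

theory Defs
  imports "HOL-Analysis.Analysis" "HOL-Library.Liminf_Limsup"
begin

definition prob_simplex :: "(real ^ 'y::finite) set" where
  "prob_simplex = {q. (\<forall>i. 0 \<le> q $ i) \<and> (\<Sum>i\<in>UNIV. q $ i) = 1}"

definition fconj :: "('v::real_inner \<Rightarrow> ereal) \<Rightarrow> 'v \<Rightarrow> ereal" where
  "fconj f \<theta> = (SUP x. ereal (\<theta> \<bullet> x) - f x)"

definition fy_loss :: "('v::real_inner \<Rightarrow> ereal) \<Rightarrow> 'v \<Rightarrow> 'v \<Rightarrow> ereal" where
  "fy_loss \<Omega> \<theta> \<mu> = \<Omega> \<mu> + fconj \<Omega> \<theta> - ereal (\<theta> \<bullet> \<mu>)"

definition edom :: "('v \<Rightarrow> ereal) \<Rightarrow> 'v set" where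
  "edom f = {x. f x < \<infinity>}"

definition proper_fun :: "('v \<Rightarrow> ereal) \<Rightarrow> bool" where
  "proper_fun f \<longleftrightarrow> (\<forall>x. f x \<noteq> -\<infinity>) \<and> (\<exists>x. f x \<noteq> \<infinity>)"

definition lsc_fun :: "('v::topological_space \<Rightarrow> ereal) \<Rightarrow> bool" where
  "lsc_fun f \<longleftrightarrow> (\<forall>x. f x \<le> Liminf (at x) f)"

definition convex_fun :: "('v::real_vector \<Rightarrow> ereal) \<Rightarrow> bool" where
  "convex_fun f \<longleftrightarrow> (\<forall>x y t. 0 < t \<and> t < 1 \<longrightarrow>
      f (t *\<^sub>R x + (1 - t) *\<^sub>R y) \<le> ereal t * f x + ereal (1 - t) * f y)"

definition int_within :: "'v::metric_space set \<Rightarrow> 'v set \<Rightarrow> 'v set" where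
  "int_within H S = {x \<in> S. \<exists>e>0. ball x e \<inter> H \<subseteq> S}"

definition dnorm_on :: "'v::real_normed_vector set \<Rightarrow> ('v \<Rightarrow> real) \<Rightarrow> real" where
  "dnorm_on V D = Sup {\<bar>D w\<bar> | w. w \<in> V \<and> norm w \<le> 1}"

text \<open>Restriction of f to the affine set H is of Legendre type w.r.t. the metric of H:
  strictly convex on the (H-relative) interior of its domain, and essentially smooth
  (that interior is nonempty, f is differentiable along H there, and the norm of the
  gradient along H blows up at the boundary of that interior).\<close>
definition legendre_on :: "('v::real_normed_vector) set \<Rightarrow> ('v \<Rightarrow> ereal) \<Rightarrow> bool" where
  "legendre_on H f \<longleftrightarrow>
    (let D = edom f \<inter> H; I = int_within H D; V = {a - b | a b. a \<in> H \<and> b \<in> H} in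
      (\<forall>x\<in>I. \<forall>y\<in>I. \<forall>t. x \<noteq> y \<and> 0 < t \<and> t < 1 \<longrightarrow>
          f (t *\<^sub>R x + (1 - t) *\<^sub>R y) < ereal t * f x + ereal (1 - t) * f y)
      \<and> I \<noteq> {}
      \<and> (\<forall>x\<in>I. \<exists>D'. ((\<lambda>z. real_of_ereal (f z)) has_derivative D') (at x within H))
      \<and> (\<forall>(xs :: nat \<Rightarrow> 'v) Ds b.
           (\<forall>k. xs k \<in> I \<and> ((\<lambda>z. real_of_ereal (f z)) has_derivative Ds k) (at (xs k) within H))
           \<and> xs \<longlonglongrightarrow> b \<and> b \<in> closure I - I
           \<longrightarrow> filterlim (\<lambda>k. dnorm_on V (Ds k)) at_top sequentially))"

text \<open>Omega_C(mu) = min { Omega_Delta(q) : q in prob_simplex, Y q = mu } for mu in conv Y,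
  +infinity otherwise (the minimum is written as an infimum).\<close>
definition omega_C :: "real ^ 'y ^ 'd \<Rightarrow> (real ^ 'y::finite \<Rightarrow> ereal) \<Rightarrow> real ^ 'd::finite \<Rightarrow> ereal" where
  "omega_C Y \<Omega> \<mu> = (if \<mu> \<in> convex hull (columns Y)
      then (INF q \<in> {q \<in> prob_simplex. Y *v q = \<mu>}. \<Omega> q) else \<infinity>)"

end

theory Submission
  imports Defs
begin

text \<open>Since \<open>\<Omega>\<close> is finite, convex and lower semicontinuous on the compact simplex, the supremum
  defining \<open>\<Omega>\<^sup>*(s)\<close> is attained. Essential smoothness pushes every maximiser into the relative
  interior of the simplex (on the segment from a boundary maximiser to an interior point the
  gradient inequality bounds the gradients, which must blow up), and there strict convexity makes
  it unique. A unique maximiser \<open>q\<close> is the gradient of \<open>\<Omega>\<^sup>*\<close> at \<open>s\<close>, because the gap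
  \<open>\<Omega>\<^sup>*(s) - (s \<bullet> p - \<Omega> p)\<close> is bounded away from zero for \<open>p\<close> away from \<open>q\<close>.
  Splitting the supremum defining \<open>\<Omega>\<^sub>C\<^sup>*\<close> over the fibres \<open>{q. Y q = \<mu>}\<close> gives
  \<open>\<Omega>\<^sub>C\<^sup>*(\<theta>) = \<Omega>\<^sup>*(Y\<^sup>T \<theta>)\<close>; orthogonally to the affine hull of the columns, \<open>\<theta> \<bullet> Y q\<close> is
  constant on the simplex, so \<open>\<Omega>\<^sub>C\<^sup>*\<close> is affine there. The two Fenchel-Young losses then differ by
  the constant \<open>\<Omega> q - \<Omega>\<^sub>C (Y q) \<ge> 0\<close>, which vanishes exactly when \<open>q\<close> minimises \<open>\<Omega>\<close> on its fibre.\<close>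

section \<open>The probability simplex\<close>

lemma closed_prob_simplex: "closed (prob_simplex :: (real^'y::finite) set)"
proof -
  have "prob_simplex = {q::real^'y. \<forall>i. 0 \<le> q $ i} \<inter> {q. (\<Sum>i\<in>UNIV. q $ i) = 1}"
    unfolding prob_simplex_def by auto
  also have "closed \<dots>"
    by (intro closed_Int closed_Collect_all closed_Collect_le closed_Collect_eq continuous_intros)
  finally show ?thesis .
qed

lemma norm_le_one_prob_simplex:
  assumes "q \<in> prob_simplex"
  shows "norm q \<le> 1"
proof -
  have "norm q \<le> (\<Sum>i\<in>UNIV. \<bar>q$i\<bar>)" by (rule norm_le_l1_cart)
  also have "\<dots> = 1" using assms unfolding prob_simplex_def by auto
  finally show ?thesis .
qed

lemma compact_prob_simplex: "compact (prob_simplex :: (real^'y::finite) set)"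
  using closed_prob_simplex norm_le_one_prob_simplex
  by (metis bounded_iff compact_eq_bounded_closed)

lemma convex_prob_simplex: "convex (prob_simplex :: (real^'y::finite) set)"
  unfolding convex_def prob_simplex_def
  by (auto simp: sum.distrib sum_distrib_left[symmetric])

lemma axis_in_prob_simplex: "(axis i 1 :: real^'y::finite) \<in> prob_simplex"
  unfolding prob_simplex_def by (auto simp: axis_def)

lemma matrix_vector_mult_in_convex_hull_columns:
  assumes "q \<in> prob_simplex"
  shows "(Y :: real^'y::finite^'d::finite) *v q \<in> convex hull (columns Y)"
proof -
  have "Y *v q = (\<Sum>i\<in>UNIV. q$i *\<^sub>R column i Y)"
    by (simp add: matrix_mult_sum scalar_mult_eq_scaleR)
  also have "\<dots> \<in> convex hull (columns Y)"
    by (rule convex_sum) (use assms in \<open>auto simp: prob_simplex_def columns_def intro!: hull_inc\<close>)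
  finally show ?thesis .
qed

section \<open>Lower semicontinuity and conjugates on compact sets\<close>

text \<open>Lower semicontinuity relative to \<open>K\<close>: unlike \<open>lsc_fun\<close>, points outside \<open>K\<close> are ignored.\<close>
definition lsc_on :: "'a::metric_space set \<Rightarrow> ('a \<Rightarrow> real) \<Rightarrow> bool" where
  "lsc_on K h \<longleftrightarrow> (\<forall>x\<in>K. \<forall>y < h x. \<exists>d>0. \<forall>z\<in>K. dist z x < d \<longrightarrow> y < h z)"

lemma lsc_on_subset: "lsc_on K h \<Longrightarrow> L \<subseteq> K \<Longrightarrow> lsc_on L h"
  unfolding lsc_on_def by blast

lemma lsc_on_add_continuous:
  fixes h g :: "'a::metric_space \<Rightarrow> real"
  assumes h: "lsc_on K h" and g: "continuous_on K g"
  shows "lsc_on K (\<lambda>x. h x + g x)"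
  unfolding lsc_on_def
proof (intro ballI allI impI)
  fix x y assume x: "x \<in> K" and y: "y < h x + g x"
  define e where "e = (h x + g x - y) / 2"
  have e: "e > 0" "y = h x + g x - 2 * e" using y unfolding e_def by (auto simp: field_simps)
  obtain d1 where d1: "d1 > 0" "\<forall>z\<in>K. dist z x < d1 \<longrightarrow> h x - e < h z"
  proof -
    have "h x - e < h x" using e by simp
    then show ?thesis using that h x unfolding lsc_on_def by blast
  qed
  obtain d2 where d2: "d2 > 0" "\<forall>z\<in>K. dist z x < d2 \<longrightarrow> dist (g z) (g x) < e"
    using g x e unfolding continuous_on_iff by blast
  show "\<exists>d>0. \<forall>z\<in>K. dist z x < d \<longrightarrow> y < h z + g z"
  proof (intro exI[of _ "min d1 d2"] conjI ballI impI)
    fix z assume "z \<in> K" "dist z x < min d1 d2"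
    then have "h x - e < h z" "g x - g z < e" using d1 d2 by (auto simp: dist_real_def abs_less_iff)
    then show "y < h z + g z" using e(2) by linarith
  qed (use d1 d2 in auto)
qed

lemma lsc_on_attains_min:
  fixes h :: "'a::metric_space \<Rightarrow> real"
  assumes "compact K" "K \<noteq> {}" "lsc_on K h"
  shows "\<exists>x\<in>K. \<forall>z\<in>K. h x \<le> h z"
proof (rule ccontr)
  assume "\<not> ?thesis"
  then have "\<forall>x\<in>K. \<exists>z\<in>K. h z < h x" by (auto simp: not_le)
  then obtain better where better: "\<And>x. x \<in> K \<Longrightarrow> better x \<in> K \<and> h (better x) < h x"
    by metis
  have "\<forall>x\<in>K. \<exists>d>0. \<forall>z\<in>K. dist z x < d \<longrightarrow> h (better x) < h z"
    using assms(3) better unfolding lsc_on_def by blast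
  then obtain rad where rad: "\<And>x. x \<in> K \<Longrightarrow> rad x > 0 \<and> (\<forall>z\<in>K. dist z x < rad x \<longrightarrow> h (better x) < h z)"
    by metis
  have "K \<subseteq> (\<Union>x\<in>K. ball x (rad x))" using rad by force
  then obtain F where F: "F \<subseteq> K" "finite F" "K \<subseteq> (\<Union>x\<in>F. ball x (rad x))"
    using compactE_image[OF assms(1), of K "\<lambda>x. ball x (rad x)"] by auto
  have "F \<noteq> {}" using F assms(2) by auto
  obtain x0 where x0: "x0 \<in> F" "\<And>x. x \<in> F \<Longrightarrow> h (better x0) \<le> h (better x)"
    using ex_is_arg_min_if_finite[OF F(2) \<open>F \<noteq> {}\<close>, of "\<lambda>x. h (better x)"]
    by (auto simp: is_arg_min_linorder)
  obtain x1 where x1: "x1 \<in> F" "dist (better x0) x1 < rad x1"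
    using F better[of x0] x0(1) by (force simp: dist_commute)
  then have "h (better x1) < h (better x0)"
    using rad[of x1] better[of x0] x0(1) F(1) by blast
  with x0(2)[OF x1(1)] show False by simp
qed

definition conj_on :: "'a::real_inner set \<Rightarrow> ('a \<Rightarrow> real) \<Rightarrow> 'a \<Rightarrow> real" where
  "conj_on S f s = (SUP z\<in>S. s \<bullet> z - f z)"

lemma conj_on_eq_arg_max:
  assumes "is_arg_max (\<lambda>z. s \<bullet> z - f z) (\<lambda>z. z \<in> S) q"
  shows "conj_on S f s = s \<bullet> q - f q"
  using assms unfolding conj_on_def is_arg_max_linorder by (intro cSup_eq_maximum) auto

lemma lsc_on_ex_arg_max:
  fixes f :: "'a::real_inner \<Rightarrow> real"
  assumes "compact S" "S \<noteq> {}" "lsc_on S f"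
  shows "\<exists>q. is_arg_max (\<lambda>z. s \<bullet> z - f z) (\<lambda>z. z \<in> S) q"
proof -
  have "lsc_on S (\<lambda>z. f z + - (s \<bullet> z))"
    by (intro lsc_on_add_continuous assms continuous_intros)
  then obtain q where "q \<in> S" "\<forall>z\<in>S. f q + - (s \<bullet> q) \<le> f z + - (s \<bullet> z)"
    using lsc_on_attains_min[OF assms(1,2)] by blast
  then show ?thesis unfolding is_arg_max_linorder by (intro exI[of _ q]) auto
qed

lemma conj_on_ge:
  fixes f :: "'a::real_inner \<Rightarrow> real"
  assumes "compact S" "lsc_on S f" "z \<in> S"
  shows "s \<bullet> z - f z \<le> conj_on S f s"
proof -
  obtain q where q: "is_arg_max (\<lambda>z. s \<bullet> z - f z) (\<lambda>z. z \<in> S) q"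
    using lsc_on_ex_arg_max[of S f s] assms by blast
  then show ?thesis using assms(3) by (simp add: conj_on_eq_arg_max[OF q] is_arg_max_linorder)
qed

lemma convex_on_le_on_sphere:
  fixes g :: "'a::real_normed_vector \<Rightarrow> real"
  assumes S: "convex S" and g: "convex_on S g" and q: "q \<in> S" "\<And>z. z \<in> S \<Longrightarrow> g q \<le> g z"
    and p: "p \<in> S" "0 < \<rho>" "\<rho> \<le> norm (p - q)"
  shows "\<exists>z\<in>S \<inter> sphere q \<rho>. g z \<le> g p"
proof
  define l where "l = \<rho> / norm (p - q)"
  have np: "norm (p - q) > 0" using p by linarith
  then have l: "0 < l" "l \<le> 1" using p by (auto simp: l_def divide_le_eq_1)
  define z where "z = (1 - l) *\<^sub>R q + l *\<^sub>R p"
  have zS: "z \<in> S" unfolding z_def using convexD[OF S q(1) p(1), of "1 - l" l] l by auto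
  have "z - q = l *\<^sub>R (p - q)" by (simp add: z_def algebra_simps)
  then have "norm (z - q) = \<rho>" using np p(2) by (simp add: l_def)
  then show "z \<in> S \<inter> sphere q \<rho>" using zS by (simp add: dist_norm norm_minus_commute)
  have "g z \<le> (1 - l) * g q + l * g p"
    unfolding z_def using convex_onD[OF g, of l q p] l q(1) p(1) by simp
  also have "\<dots> \<le> (1 - l) * g p + l * g p" using q(2)[OF p(1)] l by (simp add: mult_left_mono)
  finally show "g z \<le> g p" by (simp add: algebra_simps)
qed

lemma conj_on_gap_pos:
  fixes f :: "'a::real_inner \<Rightarrow> real"
  assumes "compact S" "lsc_on S f"
    and unique: "\<And>p. is_arg_max (\<lambda>z. s \<bullet> z - f z) (\<lambda>z. z \<in> S) p \<Longrightarrow> p = q"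
    and p: "p \<in> S" "p \<noteq> q"
  shows "s \<bullet> p - f p < conj_on S f s"
proof (rule ccontr)
  assume "\<not> s \<bullet> p - f p < conj_on S f s"
  then have "s \<bullet> z - f z \<le> s \<bullet> p - f p" if "z \<in> S" for z
    using conj_on_ge[OF assms(1,2) that, of s] by simp
  then have "is_arg_max (\<lambda>z. s \<bullet> z - f z) (\<lambda>z. z \<in> S) p"
    using p(1) by (simp add: is_arg_max_linorder)
  then show False using unique p(2) by simp
qed

lemma lsc_on_pos_bounded_below:
  fixes g :: "'a::metric_space \<Rightarrow> real"
  assumes "compact K" "lsc_on K g" "\<And>z. z \<in> K \<Longrightarrow> 0 < g z"
  obtains m where "m > 0" "\<And>z. z \<in> K \<Longrightarrow> m \<le> g z"
proof (cases "K = {}")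
  case True
  then show ?thesis using that[of 1] by simp
next
  case False
  then obtain z0 where "z0 \<in> K" "\<forall>z\<in>K. g z0 \<le> g z"
    using lsc_on_attains_min[OF assms(1) _ assms(2)] by blast
  then show ?thesis using that[of "g z0"] assms(3) by blast
qed

lemma conj_on_gap_away_from_arg_max:
  fixes f :: "'a::real_inner \<Rightarrow> real"
  assumes S: "compact S" "convex S" and f: "convex_on S f" "lsc_on S f"
    and q: "is_arg_max (\<lambda>z. s \<bullet> z - f z) (\<lambda>z. z \<in> S) q"
    and unique: "\<And>p. is_arg_max (\<lambda>z. s \<bullet> z - f z) (\<lambda>z. z \<in> S) p \<Longrightarrow> p = q"
    and "\<rho> > 0"
  shows "\<exists>m>0. \<forall>p\<in>S. \<rho> \<le> norm (p - q) \<longrightarrow> m \<le> conj_on S f s - (s \<bullet> p - f p)"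
proof -
  define gap where "gap = (\<lambda>p. f p + (conj_on S f s - s \<bullet> p))"
  have qS: "q \<in> S" and gap_q: "gap q = 0"
    using q conj_on_eq_arg_max[OF q] by (auto simp: gap_def is_arg_max_linorder)
  have gap_nonneg: "gap q \<le> gap p" if "p \<in> S" for p
    using conj_on_ge[OF S(1) f(2) that, of s] gap_q by (simp add: gap_def)
  have gap_convex: "convex_on S gap"
  proof (rule convex_onI[OF _ S(2)])
    fix t :: real and x y assume t: "0 < t" "t < 1" and xy: "x \<in> S" "y \<in> S"
    have "f ((1 - t) *\<^sub>R x + t *\<^sub>R y) \<le> (1 - t) * f x + t * f y"
      using convex_onD[OF f(1), of t x y] t xy by simp
    moreover have "s \<bullet> ((1 - t) *\<^sub>R x + t *\<^sub>R y) = (1 - t) * (s \<bullet> x) + t * (s \<bullet> y)"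
      by (simp add: inner_add_right)
    ultimately show "gap ((1 - t) *\<^sub>R x + t *\<^sub>R y) \<le> (1 - t) * gap x + t * gap y"
      by (simp add: gap_def algebra_simps)
  qed
  define K where "K = S \<inter> sphere q \<rho>"
  have "closed (sphere q \<rho>)" unfolding sphere_def by (intro closed_Collect_eq continuous_intros)
  then have "compact K" unfolding K_def using S(1) by (intro compact_Int_closed)
  moreover have "lsc_on K gap" unfolding gap_def
    using lsc_on_subset[OF f(2), of K] by (intro lsc_on_add_continuous continuous_intros) (auto simp: K_def)
  moreover have "0 < gap z" if "z \<in> K" for z
  proof -
    have "z \<in> S" "z \<noteq> q" using that \<open>\<rho> > 0\<close> by (auto simp: K_def)
    then show ?thesis using conj_on_gap_pos[OF S(1) f(2), of s q z] unique by (simp add: gap_def)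
  qed
  ultimately obtain m where m: "m > 0" "\<And>z. z \<in> K \<Longrightarrow> m \<le> gap z"
    by (rule lsc_on_pos_bounded_below) auto
  show ?thesis
  proof (intro exI[of _ m] conjI ballI impI m(1))
    fix p assume "p \<in> S" "\<rho> \<le> norm (p - q)"
    then obtain z where "z \<in> K" "gap z \<le> gap p"
      using convex_on_le_on_sphere[OF S(2) gap_convex qS gap_nonneg _ \<open>\<rho> > 0\<close>] unfolding K_def by blast
    then show "m \<le> conj_on S f s - (s \<bullet> p - f p)" using m(2)[of z] by (simp add: gap_def)
  qed
qed

lemma conj_on_increment:
  fixes f :: "'a::real_inner \<Rightarrow> real"
  assumes S: "compact S" "lsc_on S f"
    and q: "is_arg_max (\<lambda>z. s \<bullet> z - f z) (\<lambda>z. z \<in> S) q"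
    and p: "is_arg_max (\<lambda>z. y \<bullet> z - f z) (\<lambda>z. z \<in> S) p"
  shows "0 \<le> conj_on S f y - conj_on S f s - q \<bullet> (y - s)"
    and "conj_on S f y - conj_on S f s - q \<bullet> (y - s)
      = (y - s) \<bullet> (p - q) - (conj_on S f s - (s \<bullet> p - f p))"
proof -
  have "y \<bullet> q - f q \<le> conj_on S f y"
    using q by (intro conj_on_ge[OF S]) (simp add: is_arg_max_linorder)
  moreover have "q \<bullet> (y - s) = y \<bullet> q - s \<bullet> q" by (simp add: inner_diff_right inner_commute)
  ultimately show "0 \<le> conj_on S f y - conj_on S f s - q \<bullet> (y - s)"
    by (simp add: conj_on_eq_arg_max[OF q])
  show "conj_on S f y - conj_on S f s - q \<bullet> (y - s)
      = (y - s) \<bullet> (p - q) - (conj_on S f s - (s \<bullet> p - f p))"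
    by (simp add: conj_on_eq_arg_max[OF p] inner_diff_left inner_diff_right inner_commute)
qed

lemma conj_on_has_derivative_unique_arg_max:
  fixes f :: "'a::real_inner \<Rightarrow> real"
  assumes S: "compact S" "convex S" and f: "convex_on S f" "lsc_on S f"
    and q: "is_arg_max (\<lambda>z. s \<bullet> z - f z) (\<lambda>z. z \<in> S) q"
    and unique: "\<And>p. is_arg_max (\<lambda>z. s \<bullet> z - f z) (\<lambda>z. z \<in> S) p \<Longrightarrow> p = q"
  shows "(conj_on S f has_derivative (\<lambda>v. q \<bullet> v)) (at s)"
  unfolding has_derivative_within_alt
proof (intro conjI allI impI bounded_linear_inner_right)
  fix e :: real assume "e > 0"
  have qS: "q \<in> S" using q by (simp add: is_arg_max_linorder)
  obtain m where m: "m > 0" "\<forall>p\<in>S. e \<le> norm (p - q) \<longrightarrow> m \<le> conj_on S f s - (s \<bullet> p - f p)"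
    using conj_on_gap_away_from_arg_max[OF assms \<open>e > 0\<close>] by blast
  define d where "d = m / (diameter S + 1)"
  have diam: "0 \<le> diameter S" using diameter_ge_0 compact_imp_bounded[OF S(1)] by blast
  have d: "d > 0" using m diam by (simp add: d_def)
  show "\<exists>d>0. \<forall>y\<in>UNIV. norm (y - s) < d \<longrightarrow>
      norm (conj_on S f y - conj_on S f s - q \<bullet> (y - s)) \<le> e * norm (y - s)"
  proof (intro exI[of _ d] conjI ballI impI d)
    fix y assume y: "norm (y - s) < d"
    obtain p where p: "is_arg_max (\<lambda>z. y \<bullet> z - f z) (\<lambda>z. z \<in> S) p"
      using lsc_on_ex_arg_max[OF S(1) _ f(2)] qS by blast
    have pS: "p \<in> S" using p by (simp add: is_arg_max_linorder)
    note E = conj_on_increment[OF S(1) f(2) q p]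
    have gap_p: "0 \<le> conj_on S f s - (s \<bullet> p - f p)" using conj_on_ge[OF S(1) f(2) pS] by simp
    have cs: "(y - s) \<bullet> (p - q) \<le> norm (y - s) * norm (p - q)" by (rule norm_cauchy_schwarz)
    have "conj_on S f y - conj_on S f s - q \<bullet> (y - s) \<le> e * norm (y - s)"
    proof (cases "norm (p - q) < e")
      case True
      then have "norm (y - s) * norm (p - q) \<le> e * norm (y - s)"
        by (simp add: mult.commute mult_right_mono)
      then show ?thesis using E(2) cs gap_p by linarith
    next
      case False
      \<comment> \<open>A far-away maximiser at \<open>y\<close> is impossible: the increment would be negative.\<close>
      have "norm (p - q) \<le> diameter S"
        using diameter_bounded_bound[OF compact_imp_bounded[OF S(1)] pS qS] by (simp add: dist_norm)
      then have "norm (y - s) * norm (p - q) \<le> d * diameter S"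
        using y d by (intro mult_mono) auto
      also have "\<dots> < m" using m diam by (simp add: d_def field_simps)
      finally show ?thesis using E cs m(2) pS False by fastforce
    qed
    then show "norm (conj_on S f y - conj_on S f s - q \<bullet> (y - s)) \<le> e * norm (y - s)"
      using E(1) by simp
  qed
qed

lemma conj_on_eq_const_inner:
  fixes f :: "'a::real_inner \<Rightarrow> real"
  assumes "compact S" "S \<noteq> {}" "lsc_on S f" and const: "\<And>z. z \<in> S \<Longrightarrow> s \<bullet> z = c"
  shows "conj_on S f s = c + conj_on S f 0"
proof -
  obtain p where p: "is_arg_max (\<lambda>z. 0 \<bullet> z - f z) (\<lambda>z. z \<in> S) p"
    using lsc_on_ex_arg_max[OF assms(1-3)] by blast
  then have "is_arg_max (\<lambda>z. s \<bullet> z - f z) (\<lambda>z. z \<in> S) p"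
    using const by (simp add: is_arg_max_linorder)
  then show ?thesis
    using conj_on_eq_arg_max[OF p] const p by (simp add: conj_on_eq_arg_max is_arg_max_linorder)
qed

section \<open>Relative interiors and Legendre-type functions\<close>

lemma convex_on_has_derivative_within_ge:
  fixes f :: "'a::real_normed_vector \<Rightarrow> real"
  assumes S: "convex S" and f: "convex_on S f" and xz: "x \<in> S" "z \<in> S"
    and D: "(f has_derivative D) (at x within S)"
  shows "f x + D (z - x) \<le> f z"
proof -
  define p where "p t = x + t *\<^sub>R (z - x)" for t :: real
  have p_conv: "p t = (1 - t) *\<^sub>R x + t *\<^sub>R z" for t by (simp add: p_def algebra_simps)
  have p_S: "p t \<in> S" if "t \<in> {0..1}" for t
    using convexD[OF S xz, of "1 - t" t] that by (simp add: p_conv)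
  have "(p has_derivative (\<lambda>t. t *\<^sub>R (z - x))) (at 0 within {0..1})"
    unfolding p_def by (auto intro!: derivative_eq_intros)
  moreover have "p ` {0..1} \<subseteq> S" using p_S by blast
  then have "(f has_derivative D) (at (p 0) within p ` {0..1})"
    using has_derivative_subset[OF D] by (simp add: p_def)
  ultimately have "((f \<circ> p) has_derivative (D \<circ> (\<lambda>t. t *\<^sub>R (z - x)))) (at 0 within {0..1})"
    by (rule diff_chain_within)
  moreover have "D \<circ> (\<lambda>t. t *\<^sub>R (z - x)) = (*) (D (z - x))"
    using linear_scale[OF has_derivative_linear[OF D]] by (auto simp: fun_eq_iff)
  ultimately have "((f \<circ> p) has_field_derivative D (z - x)) (at 0 within {0..1})"
    by (simp add: has_field_derivative_def)
  then have lim: "((\<lambda>t. (f (p t) - f x) / t) \<longlongrightarrow> D (z - x)) (at_right 0)"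
    unfolding has_field_derivative_iff at_within_Icc_at_right[OF zero_less_one]
    by (simp add: p_def)
  have "(f (p t) - f x) / t \<le> f z - f x" if "0 < t" "t < 1" for t
  proof -
    have "f (p t) \<le> (1 - t) * f x + t * f z"
      unfolding p_conv using convex_onD[OF f, of t x z] that xz by simp
    then have "f (p t) - f x \<le> (f z - f x) * t" by (simp add: algebra_simps)
    then show ?thesis using that by (simp add: pos_divide_le_eq)
  qed
  then have "eventually (\<lambda>t. (f (p t) - f x) / t \<le> f z - f x) (at_right 0)"
    unfolding eventually_at_right[OF zero_less_one] by (intro exI[of _ 1]) auto
  from tendsto_upperbound[OF lim this] show ?thesis by simp
qed

lemma int_within_subset: "int_within H S \<subseteq> S"
  unfolding int_within_def by auto

lemma segment_to_int_within:
  fixes S :: "'a::real_normed_vector set"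
  assumes H: "affine H" "S \<subseteq> H" and S: "convex S"
    and x: "x \<in> int_within H S" and a: "a \<in> S" and t: "0 < t" "t \<le> 1"
  shows "(1 - t) *\<^sub>R a + t *\<^sub>R x \<in> int_within H S"
proof -
  have xS: "x \<in> S" using x int_within_subset by blast
  obtain r where r: "r > 0" "ball x r \<inter> H \<subseteq> S" using x unfolding int_within_def by auto
  define p where "p = (1 - t) *\<^sub>R a + t *\<^sub>R x"
  have pS: "p \<in> S" unfolding p_def using convexD[OF S a xS, of "1 - t" t] t by auto
  \<comment> \<open>The homothety with centre \<open>a\<close> and ratio \<open>t\<close> maps \<open>ball x r \<inter> H\<close> onto \<open>ball p (t * r) \<inter> H\<close>.\<close>
  have "ball p (t * r) \<inter> H \<subseteq> S"
  proof
    fix z assume z: "z \<in> ball p (t * r) \<inter> H"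
    define w where "w = (1 / t) *\<^sub>R z + (1 - 1 / t) *\<^sub>R a"
    have wH: "w \<in> H" unfolding w_def
      by (rule mem_affine[OF H(1)]) (use z a H(2) in auto)
    have "w - x = (1 / t) *\<^sub>R (z - p)" unfolding w_def p_def using t
      by (simp add: algebra_simps)
    then have "norm (w - x) = (1 / t) * norm (z - p)" using t by simp
    also have "\<dots> < (1 / t) * (t * r)" using z t
      by (intro mult_strict_left_mono) (auto simp: dist_norm norm_minus_commute)
    also have "\<dots> = r" using t by simp
    finally have "w \<in> ball x r" by (simp add: dist_norm norm_minus_commute)
    then have wS: "w \<in> S" using r wH by auto
    have "z = t *\<^sub>R w + (1 - t) *\<^sub>R a" unfolding w_def using t by (simp add: algebra_simps)
    then show "z \<in> S" using convexD[OF S wS a, of t "1 - t"] t by auto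
  qed
  moreover have "t * r > 0" using r t by simp
  ultimately show ?thesis unfolding int_within_def p_def[symmetric] using pS by blast
qed

lemma cball_Int_subset_int_within:
  assumes r: "ball x r \<inter> H \<subseteq> S" and "r' < r"
  shows "cball x r' \<inter> H \<subseteq> int_within H S"
proof
  fix z assume z: "z \<in> cball x r' \<inter> H"
  have "ball z (r - r') \<inter> H \<subseteq> ball x r \<inter> H"
  proof
    fix y assume y: "y \<in> ball z (r - r') \<inter> H"
    have "dist x y \<le> dist x z + dist z y" by (rule dist_triangle)
    also have "\<dots> < r' + (r - r')" using y z by (intro add_le_less_mono) auto
    finally show "y \<in> ball x r \<inter> H" using y by auto
  qed
  moreover have "z \<in> ball x r \<inter> H" using z \<open>r' < r\<close> by auto
  ultimately show "z \<in> int_within H S"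
    unfolding int_within_def using r \<open>r' < r\<close> by (intro CollectI conjI exI[of _ "r - r'"]) auto
qed

lemma dnorm_on_le:
  assumes "0 \<in> V" "\<And>w. w \<in> V \<Longrightarrow> norm w \<le> 1 \<Longrightarrow> \<bar>D w\<bar> \<le> B"
  shows "dnorm_on V D \<le> B"
  unfolding dnorm_on_def using assms by (intro cSup_least) auto

locale legendre_type =
  fixes H S :: "'a::euclidean_space set" and f :: "'a \<Rightarrow> real"
  assumes affine_H: "affine H" and S_subset_H: "S \<subseteq> H" and convex_S: "convex S"
    and convex_f: "convex_on S f"
    and strictly_convex: "\<And>x y t. x \<in> int_within H S \<Longrightarrow> y \<in> int_within H S \<Longrightarrow> x \<noteq> y \<Longrightarrow>
      0 < t \<Longrightarrow> t < 1 \<Longrightarrow> f (t *\<^sub>R x + (1 - t) *\<^sub>R y) < t * f x + (1 - t) * f y"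
    and int_within_nonempty: "int_within H S \<noteq> {}"
    and differentiable: "\<And>x. x \<in> int_within H S \<Longrightarrow> \<exists>D. (f has_derivative D) (at x within H)"
    and gradient_blowup: "\<And>xs Ds b. \<forall>k. xs k \<in> int_within H S \<and> (f has_derivative Ds k) (at (xs k) within H)
      \<Longrightarrow> xs \<longlonglongrightarrow> b \<Longrightarrow> b \<in> closure (int_within H S) - int_within H S
      \<Longrightarrow> filterlim (\<lambda>k. dnorm_on {a - b |a b. a \<in> H \<and> b \<in> H} (Ds k)) at_top sequentially"
begin

lemma bounded_above_near_int_within:
  assumes "x \<in> int_within H S"
  obtains r M where "r > 0" "cball x r \<inter> H \<subseteq> int_within H S" "\<And>z. z \<in> cball x r \<inter> H \<Longrightarrow> f z \<le> M"
proof -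
  obtain r where r: "r > 0" "ball x r \<inter> H \<subseteq> S" using assms unfolding int_within_def by auto
  define K where "K = cball x (r / 2) \<inter> H"
  have K: "K \<subseteq> int_within H S" unfolding K_def using r by (intro cball_Int_subset_int_within) auto
  have "continuous (at z within K) f" if z: "z \<in> K" for z
  proof -
    obtain D where "(f has_derivative D) (at z within H)" using differentiable K z by blast
    then have "continuous (at z within H) f" by (rule has_derivative_continuous)
    then show ?thesis by (rule continuous_within_subset) (auto simp: K_def)
  qed
  then have "continuous_on K f" by (simp add: continuous_on_eq_continuous_within)
  moreover have "compact K" unfolding K_def using affine_closed[OF affine_H] by (intro compact_Int_closed) auto
  moreover have "x \<in> K" using assms S_subset_H int_within_subset r by (auto simp: K_def)
  ultimately obtain z0 where "\<forall>z\<in>K. f z \<le> f z0" using continuous_attains_sup[of K f] by blast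
  then show ?thesis using that[of "r / 2" "f z0"] r K by (auto simp: K_def)
qed

lemma arg_max_segment_bounds:
  assumes a: "is_arg_max (\<lambda>z. s \<bullet> z - f z) (\<lambda>z. z \<in> S) a"
    and x: "x \<in> S" and t: "0 < t" "t \<le> 1"
    and D: "(f has_derivative D) (at ((1 - t) *\<^sub>R a + t *\<^sub>R x) within H)"
  shows "f a + t * (s \<bullet> (x - a)) \<le> f ((1 - t) *\<^sub>R a + t *\<^sub>R x)"
    and "s \<bullet> (x - a) \<le> D (x - a)"
proof -
  define y where "y = (1 - t) *\<^sub>R a + t *\<^sub>R x"
  have aS: "a \<in> S" and a_max: "\<And>z. z \<in> S \<Longrightarrow> s \<bullet> z - f z \<le> s \<bullet> a - f a"
    using a by (auto simp: is_arg_max_linorder)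
  have yS: "y \<in> S" unfolding y_def using convexD[OF convex_S aS x, of "1 - t" t] t by auto
  have "s \<bullet> y = s \<bullet> a + t * (s \<bullet> (x - a))"
    by (simp add: y_def inner_add_right inner_diff_right algebra_simps)
  then show fy_lower: "f a + t * (s \<bullet> (x - a)) \<le> f y" using a_max[OF yS] by linarith
  have DS: "(f has_derivative D) (at y within S)"
    using has_derivative_subset[OF D S_subset_H] by (simp add: y_def)
  have "f y + D (a - y) \<le> f a" by (rule convex_on_has_derivative_within_ge[OF convex_S convex_f yS aS DS])
  moreover have "a - y = (- t) *\<^sub>R (x - a)" by (simp add: y_def algebra_simps)
  ultimately have "t * (s \<bullet> (x - a)) \<le> t * D (x - a)"
    using fy_lower by (simp add: linear_neg[OF has_derivative_linear[OF D]]
        linear_scale[OF has_derivative_linear[OF D]])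
  then show "s \<bullet> (x - a) \<le> D (x - a)" using t by simp
qed

lemma dnorm_on_bounded_on_segment_to_arg_max:
  assumes a: "is_arg_max (\<lambda>z. s \<bullet> z - f z) (\<lambda>z. z \<in> S) a"
    and x: "x \<in> S" "r > 0" "cball x r \<inter> H \<subseteq> S" "\<And>z. z \<in> cball x r \<inter> H \<Longrightarrow> f z \<le> M"
    and t: "0 < t" "t \<le> 1"
    and D: "(f has_derivative D) (at ((1 - t) *\<^sub>R a + t *\<^sub>R x) within H)"
  shows "dnorm_on {a - b |a b. a \<in> H \<and> b \<in> H} D \<le> (M - f a - s \<bullet> (x - a)) / r"
proof -
  define y where "y = (1 - t) *\<^sub>R a + t *\<^sub>R x"
  define c where "c = s \<bullet> (x - a)"
  note bounds = arg_max_segment_bounds[OF a x(1) t D, folded y_def c_def]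
  have aS: "a \<in> S" using a by (simp add: is_arg_max_linorder)
  have yS: "y \<in> S" unfolding y_def using convexD[OF convex_S aS x(1), of "1 - t" t] t by auto
  have DS: "(f has_derivative D) (at y within S)"
    using has_derivative_subset[OF D S_subset_H] by (simp add: y_def)
  have lD: "linear D" using has_derivative_linear[OF D] .
  \<comment> \<open>Gradient inequality from \<open>y\<close> towards the points \<open>x \<plusminus> r w\<close> of the ball, where \<open>f \<le> M\<close>.\<close>
  have bound: "\<sigma> * r * D w \<le> M - f a - c"
    if \<sigma>: "\<sigma> = 1 \<or> \<sigma> = -1" and w: "w \<in> {a - b |a b. a \<in> H \<and> b \<in> H}" "norm w \<le> 1" for \<sigma> w
  proof -
    obtain a1 b1 where ab: "w = a1 - b1" "a1 \<in> H" "b1 \<in> H" using w by auto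
    define z where "z = x + (\<sigma> * r) *\<^sub>R w"
    have zH: "z \<in> H" unfolding z_def ab(1)
      using mem_affine_3_minus[OF affine_H] x(1) S_subset_H ab by auto
    have "norm (z - x) \<le> r" unfolding z_def using \<sigma> w(2) x(2) by (auto simp: mult_left_le)
    then have zK: "z \<in> cball x r \<inter> H" using zH by (simp add: dist_norm norm_minus_commute)
    have "f y + D (z - y) \<le> f z"
      using convex_on_has_derivative_within_ge[OF convex_S convex_f yS _ DS] zK x(3) by blast
    moreover have "z - y = (\<sigma> * r) *\<^sub>R w + (1 - t) *\<^sub>R (x - a)"
      by (simp add: z_def y_def algebra_simps)
    then have "D (z - y) = \<sigma> * r * D w + (1 - t) * D (x - a)"
      by (simp add: linear_add[OF lD] linear_scale[OF lD])
    moreover have "(1 - t) * c \<le> (1 - t) * D (x - a)" using bounds(2) t by (intro mult_left_mono) auto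
    ultimately show ?thesis using x(4)[OF zK] bounds(1) by (simp add: algebra_simps)
  qed
  have "dnorm_on {a - b |a b. a \<in> H \<and> b \<in> H} D \<le> (M - f a - c) / r"
  proof (rule dnorm_on_le)
    show "0 \<in> {a - b |a b. a \<in> H \<and> b \<in> H}" using x(1) S_subset_H by force
    fix w assume w: "w \<in> {a - b |a b. a \<in> H \<and> b \<in> H}" "norm w \<le> 1"
    have "r * \<bar>D w\<bar> \<le> M - f a - c"
      using bound[of 1 w] bound[of "-1" w] w by (auto simp: abs_if)
    then show "\<bar>D w\<bar> \<le> (M - f a - c) / r" using x(2) by (simp add: pos_le_divide_eq mult.commute)
  qed
  then show ?thesis by (simp add: c_def)
qed

lemma arg_max_in_int_within:
  assumes a: "is_arg_max (\<lambda>z. s \<bullet> z - f z) (\<lambda>z. z \<in> S) a"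
  shows "a \<in> int_within H S"
proof (rule ccontr)
  assume a_notin: "a \<notin> int_within H S"
  have aS: "a \<in> S" using a by (simp add: is_arg_max_linorder)
  obtain x where x: "x \<in> int_within H S" using int_within_nonempty by blast
  then have xS: "x \<in> S" using int_within_subset by blast
  obtain r M where r: "r > 0" "cball x r \<inter> H \<subseteq> int_within H S" "\<And>z. z \<in> cball x r \<inter> H \<Longrightarrow> f z \<le> M"
    using bounded_above_near_int_within[OF x] by blast
  define t where "t k = inverse (real (Suc k))" for k
  have t: "0 < t k" "t k \<le> 1" for k by (auto simp: t_def field_simps)
  define xs where "xs k = (1 - t k) *\<^sub>R a + t k *\<^sub>R x" for k
  have xs_int: "xs k \<in> int_within H S" for k
    unfolding xs_def using segment_to_int_within[OF affine_H S_subset_H convex_S x aS t] .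
  obtain Ds where Ds: "\<And>k. (f has_derivative Ds k) (at (xs k) within H)"
    using differentiable[OF xs_int] by metis
  have "(\<lambda>k. a + t k *\<^sub>R (x - a)) \<longlonglongrightarrow> a + 0 *\<^sub>R (x - a)"
    unfolding t_def by (intro tendsto_intros LIMSEQ_inverse_real_of_nat)
  moreover have "xs = (\<lambda>k. a + t k *\<^sub>R (x - a))" by (auto simp: xs_def algebra_simps)
  ultimately have "xs \<longlonglongrightarrow> a" by simp
  then have "a \<in> closure (int_within H S)" using xs_int unfolding closure_sequential by blast
  then have "filterlim (\<lambda>k. dnorm_on {a - b |a b. a \<in> H \<and> b \<in> H} (Ds k)) at_top sequentially"
    using gradient_blowup[of xs Ds a] xs_int Ds \<open>xs \<longlonglongrightarrow> a\<close> a_notin by blast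
  then obtain k where "(M - f a - s \<bullet> (x - a)) / r < dnorm_on {a - b |a b. a \<in> H \<and> b \<in> H} (Ds k)"
    unfolding filterlim_at_top_dense eventually_sequentially by blast
  moreover have "cball x r \<inter> H \<subseteq> S" using r(2) int_within_subset by blast
  then have "dnorm_on {a - b |a b. a \<in> H \<and> b \<in> H} (Ds k) \<le> (M - f a - s \<bullet> (x - a)) / r"
    using dnorm_on_bounded_on_segment_to_arg_max[OF a xS r(1) _ r(3) t Ds[of k, unfolded xs_def]]
    by blast
  ultimately show False by linarith
qed

lemma arg_max_unique:
  assumes p: "is_arg_max (\<lambda>z. s \<bullet> z - f z) (\<lambda>z. z \<in> S) p"
    and q: "is_arg_max (\<lambda>z. s \<bullet> z - f z) (\<lambda>z. z \<in> S) q"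
  shows "p = q"
proof (rule ccontr)
  assume "p \<noteq> q"
  define m where "m = (1 / 2) *\<^sub>R p + (1 - 1 / 2) *\<^sub>R q"
  have pS: "p \<in> S" and qS: "q \<in> S" using p q by (auto simp: is_arg_max_linorder)
  have "f m < (1 / 2) * f p + (1 - 1 / 2) * f q" unfolding m_def
    using arg_max_in_int_within[OF p] arg_max_in_int_within[OF q] \<open>p \<noteq> q\<close>
    by (intro strictly_convex) auto
  moreover have "s \<bullet> m = (1 / 2) * (s \<bullet> p) + (1 / 2) * (s \<bullet> q)"
    by (simp add: m_def inner_add_right)
  moreover have "m \<in> S" unfolding m_def using convexD[OF convex_S pS qS, of "1 / 2" "1 - 1 / 2"] by simp
  ultimately show False using p q pS qS by (force simp: is_arg_max_linorder)
qed

end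

section \<open>Regularisers on the simplex and their marginals\<close>

lemma fy_loss_nonneg:
  assumes "\<bar>\<Omega> \<mu>\<bar> \<noteq> \<infinity>"
  shows "0 \<le> fy_loss \<Omega> \<theta> \<mu>"
proof -
  obtain a where a: "\<Omega> \<mu> = ereal a" using assms by (cases "\<Omega> \<mu>") auto
  have "ereal (\<theta> \<bullet> \<mu> - a) \<le> fconj \<Omega> \<theta>"
    unfolding fconj_def using SUP_upper[of \<mu> UNIV "\<lambda>x. ereal (\<theta> \<bullet> x) - \<Omega> x"] by (simp add: a)
  then show ?thesis unfolding fy_loss_def a by (cases "fconj \<Omega> \<theta>") auto
qed

lemma has_derivative_transpose_comp:
  fixes Y :: "real^'y::finite^'d::finite"
  assumes "(G has_derivative (\<lambda>v. g \<bullet> v)) (at (transpose Y *v \<theta>))"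
  shows "((\<lambda>t. G (transpose Y *v t)) has_derivative (\<lambda>v. (Y *v g) \<bullet> v)) (at \<theta>)"
proof -
  have "((\<lambda>t. G (transpose Y *v t)) has_derivative (\<lambda>v. g \<bullet> (transpose Y *v v))) (at \<theta>)"
    using has_derivative_compose[OF bounded_linear_imp_has_derivative[OF matrix_vector_mul_bounded_linear] assms] .
  moreover have "g \<bullet> (transpose Y *v v) = (Y *v g) \<bullet> v" for v
    by (metis inner_commute dot_lmul_matrix vector_transpose_matrix)
  ultimately show ?thesis by simp
qed

lemma inner_transpose_matrix_vector_mult:
  fixes Y :: "real^'y::finite^'d::finite"
  shows "(transpose Y *v \<theta>) \<bullet> q = \<theta> \<bullet> (Y *v q)"
  by (simp add: dot_lmul_matrix)

lemma ereal_add_gap: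
  fixes x a c :: ereal
  assumes "\<bar>x\<bar> \<noteq> \<infinity>" "\<bar>a\<bar> \<noteq> \<infinity>" "\<bar>c\<bar> \<noteq> \<infinity>" "c \<le> a"
  shows "x \<le> x + (a - c)" and "x + (a - c) = x \<longleftrightarrow> a = c"
  using assms by (cases x; cases a; cases c; simp)+

locale simplex_regularizer =
  fixes \<Omega> :: "real^'y::finite \<Rightarrow> ereal"
  assumes proper: "proper_fun \<Omega>" and lsc: "lsc_fun \<Omega>" and convex: "convex_fun \<Omega>"
    and dom: "edom \<Omega> = prob_simplex" and legendre: "legendre_on (affine hull prob_simplex) \<Omega>"
begin

text \<open>Only the values of \<open>\<omega>\<close> on the simplex matter: outside it \<open>\<Omega> = \<infinity>\<close> and \<open>\<omega> = 0\<close>.\<close>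
abbreviation \<omega> :: "real^'y \<Rightarrow> real" where "\<omega> z \<equiv> real_of_ereal (\<Omega> z)"

lemma Omega_outside: "q \<notin> prob_simplex \<Longrightarrow> \<Omega> q = \<infinity>"
  using dom unfolding edom_def by auto

lemma Omega_finite:
  assumes "q \<in> prob_simplex"
  obtains a where "\<Omega> q = ereal a"
  using assms dom proper unfolding edom_def proper_fun_def by (cases "\<Omega> q") auto

lemma convex_on_omega: "convex_on prob_simplex \<omega>"
proof (rule convex_onI[OF _ convex_prob_simplex])
  fix t :: real and x y :: "real^'y"
  assume t: "0 < t" "t < 1" and xy: "x \<in> prob_simplex" "y \<in> prob_simplex"
  have "(1 - t) *\<^sub>R x + t *\<^sub>R y \<in> prob_simplex"
    using convexD[OF convex_prob_simplex xy, of "1 - t" t] t by auto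
  then obtain a where "\<Omega> ((1 - t) *\<^sub>R x + t *\<^sub>R y) = ereal a" by (rule Omega_finite)
  moreover obtain b where "\<Omega> x = ereal b" using Omega_finite[OF xy(1)] .
  moreover obtain c where "\<Omega> y = ereal c" using Omega_finite[OF xy(2)] .
  moreover have "\<Omega> ((1 - t) *\<^sub>R x + t *\<^sub>R y) \<le> ereal (1 - t) * \<Omega> x + ereal t * \<Omega> y"
    using convex[unfolded convex_fun_def, rule_format, of "1 - t" x y] t by simp
  ultimately show "\<omega> ((1 - t) *\<^sub>R x + t *\<^sub>R y) \<le> (1 - t) * \<omega> x + t * \<omega> y"
    by simp
qed

lemma lsc_on_omega: "lsc_on prob_simplex \<omega>"
  unfolding lsc_on_def
proof (intro ballI allI impI)
  fix x y assume x: "x \<in> prob_simplex" and y: "y < \<omega> x"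
  obtain a where "\<Omega> x = ereal a" using Omega_finite[OF x] .
  then have "ereal y < \<Omega> x" using y by simp
  also have "\<Omega> x \<le> Liminf (at x) \<Omega>" using lsc unfolding lsc_fun_def by blast
  finally have "eventually (\<lambda>z. ereal y < \<Omega> z) (at x)" by (rule less_LiminfD)
  then obtain d where d: "d > 0" "\<And>z. z \<noteq> x \<Longrightarrow> dist z x < d \<Longrightarrow> ereal y < \<Omega> z"
    unfolding eventually_at by auto
  show "\<exists>d>0. \<forall>z\<in>prob_simplex. dist z x < d \<longrightarrow> y < \<omega> z"
  proof (intro exI[of _ d] conjI ballI impI d(1))
    fix z assume z: "z \<in> prob_simplex" "dist z x < d"
    obtain b where "\<Omega> z = ereal b" using Omega_finite[OF z(1)] .
    then show "y < \<omega> z" using d(2)[of z] y z by (cases "z = x") auto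
  qed
qed

sublocale legendre_type "affine hull prob_simplex" prob_simplex \<omega>
proof -
  let ?H = "affine hull (prob_simplex :: (real^'y) set)"
  let ?I = "int_within ?H prob_simplex"
  have "prob_simplex \<subseteq> ?H" by (rule hull_subset)
  then have dom_H: "edom \<Omega> \<inter> ?H = prob_simplex" by (simp add: dom Int_absorb2)
  note L = legendre[unfolded legendre_on_def Let_def dom_H]
  note strict = L[THEN conjunct1, rule_format]
  note nonempty = L[THEN conjunct2, THEN conjunct1]
  note diff = L[THEN conjunct2, THEN conjunct2, THEN conjunct1, rule_format]
  note blowup = L[THEN conjunct2, THEN conjunct2, THEN conjunct2, rule_format]
  show "legendre_type ?H prob_simplex \<omega>"
  proof
    fix x y :: "real^'y" and t :: real
    assume xy: "x \<in> ?I" "y \<in> ?I" "x \<noteq> y" and t: "0 < t" "t < 1"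
    have xyS: "x \<in> prob_simplex" "y \<in> prob_simplex" using xy int_within_subset by auto
    then have "t *\<^sub>R x + (1 - t) *\<^sub>R y \<in> prob_simplex"
      using t convexD[OF convex_prob_simplex, of x y t "1 - t"] by auto
    then obtain a where "\<Omega> (t *\<^sub>R x + (1 - t) *\<^sub>R y) = ereal a" by (rule Omega_finite)
    moreover obtain b where "\<Omega> x = ereal b" using Omega_finite[OF xyS(1)] .
    moreover obtain c where "\<Omega> y = ereal c" using Omega_finite[OF xyS(2)] .
    moreover have "\<Omega> (t *\<^sub>R x + (1 - t) *\<^sub>R y) < ereal t * \<Omega> x + ereal (1 - t) * \<Omega> y"
      using strict[of x y t] xy t by simp
    ultimately show "\<omega> (t *\<^sub>R x + (1 - t) *\<^sub>R y) < t * \<omega> x + (1 - t) * \<omega> y"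
      by simp
  next
    show "?I \<noteq> {}" by (rule nonempty)
  next
    show "\<exists>D. (\<omega> has_derivative D) (at x within ?H)" if "x \<in> ?I" for x
      using diff that .
  next
    show "filterlim (\<lambda>k. dnorm_on {a - b |a b. a \<in> ?H \<and> b \<in> ?H} (Ds k)) at_top sequentially"
      if "\<forall>k. xs k \<in> ?I \<and> (\<omega> has_derivative Ds k) (at (xs k) within ?H)"
        and "xs \<longlonglongrightarrow> b" and "b \<in> closure ?I - ?I" for xs Ds b
      using blowup that by blast
  qed (simp_all add: hull_subset convex_prob_simplex convex_on_omega)
qed

lemma ex_arg_max: "\<exists>q. is_arg_max (\<lambda>z. s \<bullet> z - \<omega> z) (\<lambda>z. z \<in> prob_simplex) q"
  using lsc_on_ex_arg_max[OF compact_prob_simplex _ lsc_on_omega] axis_in_prob_simplex by blast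

lemma fconj_eq_conj_on: "fconj \<Omega> s = ereal (conj_on prob_simplex \<omega> s)"
proof -
  obtain q where q: "is_arg_max (\<lambda>z. s \<bullet> z - \<omega> z) (\<lambda>z. z \<in> prob_simplex) q"
    using ex_arg_max by blast
  have "fconj \<Omega> s = ereal (s \<bullet> q - \<omega> q)"
    unfolding fconj_def
  proof (rule antisym)
    show "(SUP x. ereal (s \<bullet> x) - \<Omega> x) \<le> ereal (s \<bullet> q - \<omega> q)"
    proof (rule SUP_least)
      fix x show "ereal (s \<bullet> x) - \<Omega> x \<le> ereal (s \<bullet> q - \<omega> q)"
      proof (cases "x \<in> prob_simplex")
        case True
        then obtain a where "\<Omega> x = ereal a" by (rule Omega_finite)
        then show ?thesis using q True by (auto simp: is_arg_max_linorder)
      qed (simp add: Omega_outside)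
    qed
    show "ereal (s \<bullet> q - \<omega> q) \<le> (SUP x. ereal (s \<bullet> x) - \<Omega> x)"
    proof -
      have "q \<in> prob_simplex" using q by (simp add: is_arg_max_linorder)
      then obtain b where "\<Omega> q = ereal b" by (rule Omega_finite)
      then show ?thesis by (intro SUP_upper2[of q]) auto
    qed
  qed
  then show ?thesis by (simp add: conj_on_eq_arg_max[OF q])
qed

lemma conj_on_simplex_ge: "z \<in> prob_simplex \<Longrightarrow> s \<bullet> z - \<omega> z \<le> conj_on prob_simplex \<omega> s"
  by (rule conj_on_ge[OF compact_prob_simplex lsc_on_omega])

lemma conj_has_derivative:
  assumes "is_arg_max (\<lambda>z. s \<bullet> z - \<omega> z) (\<lambda>z. z \<in> prob_simplex) q"
  shows "(conj_on prob_simplex \<omega> has_derivative (\<lambda>v. q \<bullet> v)) (at s)"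
  using conj_on_has_derivative_unique_arg_max[OF compact_prob_simplex convex_prob_simplex
      convex_on_omega lsc_on_omega assms] arg_max_unique[OF _ assms] by blast

context
  fixes Y :: "real^'y^'d::finite"
begin

lemma omega_C_image:
  assumes "q \<in> prob_simplex"
  shows "omega_C Y \<Omega> (Y *v q) = (INF q'\<in>{q' \<in> prob_simplex. Y *v q' = Y *v q}. \<Omega> q')"
  using matrix_vector_mult_in_convex_hull_columns[OF assms, where Y = Y] by (simp add: omega_C_def)

lemma omega_C_image_le: "q \<in> prob_simplex \<Longrightarrow> omega_C Y \<Omega> (Y *v q) \<le> \<Omega> q"
  by (simp add: omega_C_image INF_lower)

lemma omega_C_image_eq_iff:
  assumes "q \<in> prob_simplex"
  shows "\<Omega> q = omega_C Y \<Omega> (Y *v q) \<longleftrightarrow> (\<forall>q'\<in>prob_simplex. Y *v q' = Y *v q \<longrightarrow> \<Omega> q \<le> \<Omega> q')"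
proof -
  have "\<Omega> q = omega_C Y \<Omega> (Y *v q) \<longleftrightarrow> \<Omega> q \<le> omega_C Y \<Omega> (Y *v q)"
    using omega_C_image_le[OF assms] by auto
  also have "\<dots> \<longleftrightarrow> (\<forall>q'\<in>prob_simplex. Y *v q' = Y *v q \<longrightarrow> \<Omega> q \<le> \<Omega> q')"
    by (auto simp: omega_C_image[OF assms] le_INF_iff)
  finally show ?thesis .
qed

lemma omega_C_image_finite:
  assumes "q \<in> prob_simplex"
  shows "\<bar>omega_C Y \<Omega> (Y *v q)\<bar> \<noteq> \<infinity>"
proof -
  have "ereal (- conj_on prob_simplex \<omega> 0) \<le> \<Omega> q'" if q': "q' \<in> prob_simplex" for q'
  proof -
    obtain a where "\<Omega> q' = ereal a" using Omega_finite[OF q'] .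
    then show ?thesis using conj_on_simplex_ge[OF q', of 0] by simp
  qed
  then have "ereal (- conj_on prob_simplex \<omega> 0) \<le> omega_C Y \<Omega> (Y *v q)"
    unfolding omega_C_image[OF assms] by (auto intro: INF_greatest)
  moreover obtain a where "\<Omega> q = ereal a" using Omega_finite[OF assms] .
  ultimately show ?thesis using omega_C_image_le[OF assms] by auto
qed

lemma fconj_omega_C: "fconj (omega_C Y \<Omega>) \<theta> = fconj \<Omega> (transpose Y *v \<theta>)"
proof (rule antisym)
  let ?s = "transpose Y *v \<theta>"
  show "fconj (omega_C Y \<Omega>) \<theta> \<le> fconj \<Omega> ?s"
    unfolding fconj_eq_conj_on unfolding fconj_def
  proof (rule SUP_least)
    fix \<mu>
    show "ereal (\<theta> \<bullet> \<mu>) - omega_C Y \<Omega> \<mu> \<le> ereal (conj_on prob_simplex \<omega> ?s)"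
    proof (cases "\<mu> \<in> convex hull (columns Y)")
      case True
      have "ereal (\<theta> \<bullet> \<mu> - conj_on prob_simplex \<omega> ?s) \<le> \<Omega> q'"
        if q': "q' \<in> prob_simplex" "Y *v q' = \<mu>" for q'
      proof -
        obtain a where "\<Omega> q' = ereal a" using Omega_finite[OF q'(1)] .
        then show ?thesis
          using conj_on_simplex_ge[OF q'(1), of ?s] q'(2) by (simp add: dot_lmul_matrix)
      qed
      then have "ereal (\<theta> \<bullet> \<mu> - conj_on prob_simplex \<omega> ?s) \<le> omega_C Y \<Omega> \<mu>"
        using True by (auto simp: omega_C_def intro: INF_greatest)
      then show ?thesis by (cases "omega_C Y \<Omega> \<mu>") auto
    qed (simp add: omega_C_def)
  qed
  obtain q where q: "is_arg_max (\<lambda>z. ?s \<bullet> z - \<omega> z) (\<lambda>z. z \<in> prob_simplex) q"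
    using ex_arg_max by blast
  then have qS: "q \<in> prob_simplex" by (simp add: is_arg_max_linorder)
  obtain a where a: "\<Omega> q = ereal a" using Omega_finite[OF qS] .
  obtain c where c: "omega_C Y \<Omega> (Y *v q) = ereal c"
    using omega_C_image_finite[OF qS] by (cases "omega_C Y \<Omega> (Y *v q)") auto
  have "fconj \<Omega> ?s = ereal (?s \<bullet> q - \<omega> q)"
    unfolding fconj_eq_conj_on conj_on_eq_arg_max[OF q] ..
  also have "\<dots> \<le> ereal (\<theta> \<bullet> (Y *v q)) - omega_C Y \<Omega> (Y *v q)"
    using omega_C_image_le[OF qS] by (simp add: a c dot_lmul_matrix)
  also have "\<dots> \<le> fconj (omega_C Y \<Omega>) \<theta>" unfolding fconj_def by (rule SUP_upper) simp
  finally show "fconj \<Omega> ?s \<le> fconj (omega_C Y \<Omega>) \<theta>" .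
qed

lemma fconj_omega_C_eq_conj_on:
  "fconj (omega_C Y \<Omega>) \<theta> = ereal (conj_on prob_simplex \<omega> (transpose Y *v \<theta>))"
  unfolding fconj_omega_C fconj_eq_conj_on ..

lemma edom_fconj_omega_C: "edom (fconj (omega_C Y \<Omega>)) = UNIV"
  by (simp add: edom_def fconj_omega_C_eq_conj_on)

lemma fconj_omega_C_orthogonal:
  assumes \<mu>\<^sub>0: "\<mu>\<^sub>0 \<in> affine hull columns Y"
    and \<theta>: "\<forall>v\<in>{a - b |a b. a \<in> affine hull columns Y \<and> b \<in> affine hull columns Y}. \<theta> \<bullet> v = 0"
  shows "fconj (omega_C Y \<Omega>) \<theta> = ereal (\<theta> \<bullet> \<mu>\<^sub>0 + conj_on prob_simplex \<omega> 0)"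
proof -
  have "(transpose Y *v \<theta>) \<bullet> q = \<theta> \<bullet> \<mu>\<^sub>0" if q: "q \<in> prob_simplex" for q
  proof -
    have "Y *v q \<in> affine hull columns Y"
      using matrix_vector_mult_in_convex_hull_columns[OF q] convex_hull_subset_affine_hull by blast
    then have "\<theta> \<bullet> (Y *v q - \<mu>\<^sub>0) = 0" using \<theta> \<mu>\<^sub>0 by blast
    then show ?thesis unfolding inner_transpose_matrix_vector_mult by (simp add: inner_diff_right)
  qed
  then have "conj_on prob_simplex \<omega> (transpose Y *v \<theta>) = \<theta> \<bullet> \<mu>\<^sub>0 + conj_on prob_simplex \<omega> 0"
    using axis_in_prob_simplex by (intro conj_on_eq_const_inner[OF compact_prob_simplex _ lsc_on_omega]) auto
  then show ?thesis unfolding fconj_omega_C_eq_conj_on by simp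
qed

lemma fconj_omega_C_affine_on_orthogonal:
  fixes x z :: "real^'d"
  defines "V \<equiv> {a - b |a b. a \<in> affine hull columns Y \<and> b \<in> affine hull columns Y}"
  assumes "x \<in> {w. \<forall>v\<in>V. w \<bullet> v = 0}" and "z \<in> {w. \<forall>v\<in>V. w \<bullet> v = 0}"
  shows "fconj (omega_C Y \<Omega>) ((1 - t) *\<^sub>R x + t *\<^sub>R z)
    = ereal (1 - t) * fconj (omega_C Y \<Omega>) x + ereal t * fconj (omega_C Y \<Omega>) z"
proof -
  have "columns Y \<noteq> {}" unfolding columns_def by blast
  then obtain \<mu>\<^sub>0 where "\<mu>\<^sub>0 \<in> columns Y" by blast
  then have \<mu>\<^sub>0: "\<mu>\<^sub>0 \<in> affine hull columns Y" by (rule hull_inc)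
  have "(1 - t) *\<^sub>R x + t *\<^sub>R z \<in> {w. \<forall>v\<in>V. w \<bullet> v = 0}"
    using assms(2,3) by (simp add: inner_add_left)
  then show ?thesis
    using assms(2,3) unfolding V_def
    by (simp add: fconj_omega_C_orthogonal[OF \<mu>\<^sub>0] inner_add_left algebra_simps)
qed

lemma fy_loss_eq_omega_C_image:
  assumes "q \<in> prob_simplex"
  shows "fy_loss \<Omega> (transpose Y *v \<theta>) q
    = fy_loss (omega_C Y \<Omega>) \<theta> (Y *v q) + (\<Omega> q - omega_C Y \<Omega> (Y *v q))"
proof -
  obtain a where a: "\<Omega> q = ereal a" using Omega_finite[OF assms] .
  obtain c where c: "omega_C Y \<Omega> (Y *v q) = ereal c"
    using omega_C_image_finite[OF assms] by (cases "omega_C Y \<Omega> (Y *v q)") auto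
  show ?thesis
    unfolding fy_loss_def fconj_omega_C fconj_eq_conj_on a c inner_transpose_matrix_vector_mult by simp
qed

lemma fy_loss_omega_C_image_finite:
  assumes "q \<in> prob_simplex"
  shows "\<bar>fy_loss (omega_C Y \<Omega>) \<theta> (Y *v q)\<bar> \<noteq> \<infinity>"
  using omega_C_image_finite[OF assms]
  by (cases "omega_C Y \<Omega> (Y *v q)") (auto simp: fy_loss_def fconj_omega_C_eq_conj_on)

lemma fy_loss_omega_C_image:
  assumes q: "q \<in> prob_simplex"
  shows "fy_loss (omega_C Y \<Omega>) \<theta> (Y *v q) \<le> fy_loss \<Omega> (transpose Y *v \<theta>) q"
    and "fy_loss \<Omega> (transpose Y *v \<theta>) q = fy_loss (omega_C Y \<Omega>) \<theta> (Y *v q)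
      \<longleftrightarrow> (\<forall>q'\<in>prob_simplex. Y *v q' = Y *v q \<longrightarrow> \<Omega> q \<le> \<Omega> q')"
proof -
  obtain a where a: "\<Omega> q = ereal a" using Omega_finite[OF q] .
  note gap = ereal_add_gap[OF fy_loss_omega_C_image_finite[OF q, of \<theta>] _ omega_C_image_finite[OF q]
      omega_C_image_le[OF q]]
  show "fy_loss (omega_C Y \<Omega>) \<theta> (Y *v q) \<le> fy_loss \<Omega> (transpose Y *v \<theta>) q"
    unfolding fy_loss_eq_omega_C_image[OF q] using gap(1) by (simp add: a)
  show "fy_loss \<Omega> (transpose Y *v \<theta>) q = fy_loss (omega_C Y \<Omega>) \<theta> (Y *v q)
      \<longleftrightarrow> (\<forall>q'\<in>prob_simplex. Y *v q' = Y *v q \<longrightarrow> \<Omega> q \<le> \<Omega> q')"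
    unfolding fy_loss_eq_omega_C_image[OF q] using gap(2) omega_C_image_eq_iff[OF q] by (simp add: a)
qed

lemma INF_fy_loss_omega_C_image:
  assumes q: "q \<in> prob_simplex"
  shows "(INF \<theta>. fy_loss (omega_C Y \<Omega>) \<theta> (Y *v q)) \<le> (INF \<theta>. fy_loss \<Omega> (transpose Y *v \<theta>) q)"
    and "(INF \<theta>. fy_loss \<Omega> (transpose Y *v \<theta>) q) = (INF \<theta>. fy_loss (omega_C Y \<Omega>) \<theta> (Y *v q))
      \<longleftrightarrow> (\<forall>q'\<in>prob_simplex. Y *v q' = Y *v q \<longrightarrow> \<Omega> q \<le> \<Omega> q')"
proof -
  let ?L = "\<lambda>\<theta>. fy_loss (omega_C Y \<Omega>) \<theta> (Y *v q)"
  obtain a where a: "\<Omega> q = ereal a" using Omega_finite[OF q] .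
  obtain c where c: "omega_C Y \<Omega> (Y *v q) = ereal c"
    using omega_C_image_finite[OF q] by (cases "omega_C Y \<Omega> (Y *v q)") auto
  have L_nonneg: "0 \<le> ?L \<theta>" for \<theta> by (rule fy_loss_nonneg) (simp add: c)
  have "(INF \<theta>. fy_loss \<Omega> (transpose Y *v \<theta>) q) = (INF \<theta>. ?L \<theta> + (\<Omega> q - omega_C Y \<Omega> (Y *v q)))"
    unfolding fy_loss_eq_omega_C_image[OF q] ..
  also have "\<dots> = (INF \<theta>. ?L \<theta>) + (\<Omega> q - omega_C Y \<Omega> (Y *v q))"
    using L_nonneg by (intro INF_ereal_add_left) (auto simp: a c)
  finally have INF_eq: "(INF \<theta>. fy_loss \<Omega> (transpose Y *v \<theta>) q) = \<dots>" .
  have "0 \<le> (INF \<theta>. ?L \<theta>)" using L_nonneg by (rule INF_greatest)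
  moreover have "(INF \<theta>. ?L \<theta>) \<le> ?L 0" by (rule INF_lower) simp
  ultimately have "\<bar>INF \<theta>. ?L \<theta>\<bar> \<noteq> \<infinity>"
    using fy_loss_omega_C_image_finite[OF q, of 0] by auto
  note gap = ereal_add_gap[OF this _ omega_C_image_finite[OF q] omega_C_image_le[OF q]]
  show "(INF \<theta>. ?L \<theta>) \<le> (INF \<theta>. fy_loss \<Omega> (transpose Y *v \<theta>) q)"
    unfolding INF_eq using gap(1) by (simp add: a)
  show "(INF \<theta>. fy_loss \<Omega> (transpose Y *v \<theta>) q) = (INF \<theta>. ?L \<theta>)
      \<longleftrightarrow> (\<forall>q'\<in>prob_simplex. Y *v q' = Y *v q \<longrightarrow> \<Omega> q \<le> \<Omega> q')"
    unfolding INF_eq using gap(2) omega_C_image_eq_iff[OF q] by (simp add: a)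
qed

lemma fconj_omega_C_has_derivative:
  assumes "is_arg_max (\<lambda>z. (transpose Y *v \<theta>) \<bullet> z - \<omega> z) (\<lambda>z. z \<in> prob_simplex) g"
  shows "((\<lambda>t. real_of_ereal (fconj (omega_C Y \<Omega>) t)) has_derivative (\<lambda>v. (Y *v g) \<bullet> v)) (at \<theta>)"
  unfolding fconj_omega_C_eq_conj_on real_of_ereal.simps
  by (rule has_derivative_transpose_comp[OF conj_has_derivative[OF assms]])

lemma fconj_omega_C_differentiable: "(\<lambda>t. real_of_ereal (fconj (omega_C Y \<Omega>) t)) differentiable (at \<theta>)"
  using fconj_omega_C_has_derivative ex_arg_max unfolding differentiable_def by blast

lemma fy_loss_has_derivative:
  assumes q: "q \<in> prob_simplex"
  shows "\<exists>g. ((\<lambda>s. real_of_ereal (fconj \<Omega> s)) has_derivative (\<lambda>v. g \<bullet> v)) (at (transpose Y *v \<theta>))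
    \<and> ((\<lambda>t. real_of_ereal (fy_loss \<Omega> (transpose Y *v t) q)) has_derivative (\<lambda>v. (Y *v (g - q)) \<bullet> v)) (at \<theta>)
    \<and> ((\<lambda>t. real_of_ereal (fy_loss (omega_C Y \<Omega>) t (Y *v q)))
        has_derivative (\<lambda>v. (Y *v (g - q)) \<bullet> v)) (at \<theta>)
    \<and> ((\<lambda>t. real_of_ereal (fconj (omega_C Y \<Omega>) t)) has_derivative (\<lambda>v. (Y *v g) \<bullet> v)) (at \<theta>)"
proof -
  let ?G = "conj_on prob_simplex \<omega>"
  obtain g where g: "is_arg_max (\<lambda>z. (transpose Y *v \<theta>) \<bullet> z - \<omega> z) (\<lambda>z. z \<in> prob_simplex) g"
    using ex_arg_max by blast
  have G: "(?G has_derivative (\<lambda>v. g \<bullet> v)) (at (transpose Y *v \<theta>))"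
    by (rule conj_has_derivative[OF g])
  have GY: "((\<lambda>t. ?G (transpose Y *v t)) has_derivative (\<lambda>v. (Y *v g) \<bullet> v)) (at \<theta>)"
    by (rule has_derivative_transpose_comp[OF G])
  have loss: "((\<lambda>t. c + ?G (transpose Y *v t) - t \<bullet> (Y *v q)) has_derivative (\<lambda>v. (Y *v (g - q)) \<bullet> v)) (at \<theta>)"
    for c
  proof -
    have "((\<lambda>t. c + ?G (transpose Y *v t) - t \<bullet> (Y *v q)) has_derivative
        (\<lambda>v. 0 + (Y *v g) \<bullet> v - v \<bullet> (Y *v q))) (at \<theta>)"
      by (intro has_derivative_diff has_derivative_add has_derivative_const GY
          bounded_linear_imp_has_derivative bounded_linear_inner_left)
    then show ?thesis
      by (simp add: matrix_vector_mult_diff_distrib inner_diff_right inner_commute)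
  qed
  obtain a where a: "\<Omega> q = ereal a" using Omega_finite[OF q] .
  obtain c where c: "omega_C Y \<Omega> (Y *v q) = ereal c"
    using omega_C_image_finite[OF q] by (cases "omega_C Y \<Omega> (Y *v q)") auto
  have e1: "(\<lambda>t. real_of_ereal (fy_loss \<Omega> (transpose Y *v t) q)) = (\<lambda>t. a + ?G (transpose Y *v t) - t \<bullet> (Y *v q))"
    unfolding fy_loss_def fconj_eq_conj_on a inner_transpose_matrix_vector_mult by simp
  have e2: "(\<lambda>t. real_of_ereal (fy_loss (omega_C Y \<Omega>) t (Y *v q)))
      = (\<lambda>t. c + ?G (transpose Y *v t) - t \<bullet> (Y *v q))"
    unfolding fy_loss_def fconj_omega_C_eq_conj_on c by simp
  have e3: "(\<lambda>s. real_of_ereal (fconj \<Omega> s)) = ?G"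
    by (simp add: fconj_eq_conj_on)
  show ?thesis unfolding e1 e2 e3 using G loss fconj_omega_C_has_derivative[OF g] by blast
qed

end

end

theorem proposition6:
  fixes Y :: "real ^ 'y::finite ^ 'd::finite"
    and \<Omega> :: "real ^ 'y \<Rightarrow> ereal"
  defines "\<Y> \<equiv> columns Y"
    and "V \<equiv> {a - b | a b. a \<in> affine hull columns Y \<and> b \<in> affine hull columns Y}"
    and "\<Omega>C \<equiv> omega_C Y \<Omega>"
  assumes inj_cols: "inj (\<lambda>j. column j Y)"
    and extreme: "\<forall>y\<in>\<Y>. y \<notin> convex hull (\<Y> - {y})"
    and proper: "proper_fun \<Omega>"
    and lsc: "lsc_fun \<Omega>"
    and cvx: "convex_fun \<Omega>"
    and dom: "edom \<Omega> = prob_simplex"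
    and leg: "legendre_on (affine hull prob_simplex) \<Omega>"
  shows
    "(\<forall>\<theta> q. q \<in> prob_simplex \<longrightarrow> (transpose Y *v \<theta>) \<bullet> q = \<theta> \<bullet> (Y *v q))
   \<and> (\<forall>\<theta>. fconj \<Omega>C \<theta> = fconj \<Omega> (transpose Y *v \<theta>))
   \<and> edom (fconj \<Omega>C) = UNIV
   \<and> (\<forall>\<theta>. (\<lambda>t. real_of_ereal (fconj \<Omega>C t)) differentiable (at \<theta>))
   \<and> (\<forall>x\<in>{w. \<forall>v\<in>V. w \<bullet> v = 0}. \<forall>z\<in>{w. \<forall>v\<in>V. w \<bullet> v = 0}. \<forall>t::real.
        fconj \<Omega>C ((1 - t) *\<^sub>R x + t *\<^sub>R z)
          = ereal (1 - t) * fconj \<Omega>C x + ereal t * fconj \<Omega>C z)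
   \<and> (\<forall>\<theta> q. q \<in> prob_simplex \<longrightarrow>
        \<Omega> q \<ge> \<Omega>C (Y *v q)
      \<and> fy_loss \<Omega> (transpose Y *v \<theta>) q \<ge> fy_loss \<Omega>C \<theta> (Y *v q)
      \<and> (\<Omega> q = \<Omega>C (Y *v q) \<longleftrightarrow>
           (\<forall>q'\<in>prob_simplex. Y *v q' = Y *v q \<longrightarrow> \<Omega> q \<le> \<Omega> q'))
      \<and> (fy_loss \<Omega> (transpose Y *v \<theta>) q = fy_loss \<Omega>C \<theta> (Y *v q) \<longleftrightarrow>
           (\<forall>q'\<in>prob_simplex. Y *v q' = Y *v q \<longrightarrow> \<Omega> q \<le> \<Omega> q')))
   \<and> (\<forall>q. q \<in> prob_simplex \<longrightarrow>
        (INF \<theta>'. fy_loss \<Omega> (transpose Y *v \<theta>') q) \<ge> (INF \<theta>'. fy_loss \<Omega>C \<theta>' (Y *v q))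
      \<and> ((INF \<theta>'. fy_loss \<Omega> (transpose Y *v \<theta>') q) = (INF \<theta>'. fy_loss \<Omega>C \<theta>' (Y *v q)) \<longleftrightarrow>
           (\<forall>q'\<in>prob_simplex. Y *v q' = Y *v q \<longrightarrow> \<Omega> q \<le> \<Omega> q')))
   \<and> (\<forall>\<theta> q. q \<in> prob_simplex \<longrightarrow>
        (\<exists>g. ((\<lambda>s. real_of_ereal (fconj \<Omega> s)) has_derivative (\<lambda>v. g \<bullet> v)) (at (transpose Y *v \<theta>))
          \<and> ((\<lambda>t. real_of_ereal (fy_loss \<Omega> (transpose Y *v t) q))
               has_derivative (\<lambda>v. (Y *v (g - q)) \<bullet> v)) (at \<theta>)
          \<and> ((\<lambda>t. real_of_ereal (fy_loss \<Omega>C t (Y *v q)))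
               has_derivative (\<lambda>v. (Y *v (g - q)) \<bullet> v)) (at \<theta>)
          \<and> ((\<lambda>t. real_of_ereal (fconj \<Omega>C t)) has_derivative (\<lambda>v. (Y *v g) \<bullet> v)) (at \<theta>)))"
proof -
  interpret simplex_regularizer \<Omega> using proper lsc cvx dom leg by unfold_locales
  show ?thesis
    unfolding \<Omega>C_def V_def
    by (intro conjI allI impI ballI; rule inner_transpose_matrix_vector_mult fconj_omega_C
        edom_fconj_omega_C fconj_omega_C_differentiable fconj_omega_C_affine_on_orthogonal
        omega_C_image_le omega_C_image_eq_iff fy_loss_omega_C_image INF_fy_loss_omega_C_image
        fy_loss_has_derivative; assumption)
qed

end
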